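(* Let $K\subset\mathbf{R}^d$ ($d\ge1$) be a convex compact subset, $T:\mathscr{C}(K)\to\mathscr{C}(K)$ a Markov operator such that $T(h)=h$ for every continuous affine function $h$ on $K$, $a\ge0$, and $(\mu_n)_{n\ge1}$ a sequence of Borel probability measures on $K$. Then there exist constants $C,M>0$, not depending on $f$, such that for every $f\in\mathscr{C}(K)$ and $n\ge1$, $$\|C_n(f)-f\|_\infty\le C\Big(\frac{M}{n+a}\|f\|_\infty+\omega_2\Big(f,\sqrt{\tfrac{M}{n+a}}\Big)\Big).$$
   Context: A Markov operator is a positive linear operator $T$ on $\mathscr{C}(K)$ with $T(\mathbf{1})=\mathbf{1}$; $(\tilde\mu_x^T)_{x\in K}$ are the Borel probability measures with $\int_K f\,d\tilde\mu_x^T=T(f)(x)$. $C_n(f)(x)=\int_K\cdots\int_K f\big(\frac{x_1+\dots+x_n+a x_{n+1}}{n+a}\big)\,d\tilde\mu_x^T(x_1)\cdots d\tilde\mu_x^T(x_n)\,d\mu_n(x_{n+1})$. The second modulus of continuity is $\omega_2(f,\delta)=\sup\{|f(x)-2f(\frac{x+y}{2})+f(y)|:x,y\in K,\ \|x-y\|_2\le2\delta\}$, with $\|\cdot\|_2$ the Euclidean norm. *)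

theory Defs
  imports "HOL-Analysis.Analysis" "HOL-Probability.Probability"
begin

text \<open>Markov operator on C(K): positive linear operator mapping C(K) into C(K) with T 1 = 1.
  Functions are represented as total functions; only values on K matter.\<close>
definition markov_operator :: "'a::euclidean_space set \<Rightarrow> (('a \<Rightarrow> real) \<Rightarrow> ('a \<Rightarrow> real)) \<Rightarrow> bool" where
  "markov_operator K T \<longleftrightarrow>
     (\<forall>f. continuous_on K f \<longrightarrow> continuous_on K (T f)) \<and>
     (\<forall>f g c. continuous_on K f \<longrightarrow> continuous_on K g \<longrightarrow>
        (\<forall>x\<in>K. T (\<lambda>y. c * f y + g y) x = c * T f x + T g x)) \<and>
     (\<forall>f. continuous_on K f \<longrightarrow> (\<forall>y\<in>K. 0 \<le> f y) \<longrightarrow> (\<forall>x\<in>K. 0 \<le> T f x)) \<and>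
     (\<forall>x\<in>K. T (\<lambda>_. 1) x = 1)"

definition borel_prob_on :: "'a::euclidean_space set \<Rightarrow> 'a measure \<Rightarrow> bool" where
  "borel_prob_on K m \<longleftrightarrow> prob_space m \<and> sets m = sets (restrict_space borel K)"

text \<open>The operator C_n built from the representing measures nu x (= mu-tilde_x^T) and mu_n.\<close>
definition Cn :: "('a::euclidean_space \<Rightarrow> 'a measure) \<Rightarrow> (nat \<Rightarrow> 'a measure) \<Rightarrow> real \<Rightarrow> nat
                  \<Rightarrow> ('a \<Rightarrow> real) \<Rightarrow> 'a \<Rightarrow> real" where
  "Cn nu mu a n f x =
     (\<integral>xs. (\<integral>y. f ((1 / (real n + a)) *\<^sub>R ((\<Sum>i<n. xs i) + a *\<^sub>R y)) \<partial>(mu n))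
        \<partial>(PiM {..<n} (\<lambda>_. nu x)))"

definition omega2 :: "'a::euclidean_space set \<Rightarrow> ('a \<Rightarrow> real) \<Rightarrow> real \<Rightarrow> real" where
  "omega2 K f \<delta> = Sup {\<bar>f x - 2 * f ((1/2) *\<^sub>R (x + y)) + f y\<bar> | x y.
                        x \<in> K \<and> y \<in> K \<and> norm (x - y) \<le> 2 * \<delta>}"

definition supnorm :: "'a set \<Rightarrow> ('a \<Rightarrow> real) \<Rightarrow> real" where
  "supnorm K g = Sup ((\<lambda>x. \<bar>g x\<bar>) ` K)"

end

theory Submission
  imports Defs
begin

text \<open>
  If the second differences of \<open>f\<close> at scale \<open>\<delta>\<close> are bounded by \<open>\<omega>\<close>, a maximum principle along
  segments shows that \<open>f + \<Lambda> \<parallel>\<cdot> - m\<parallel>\<^sup>2\<close> with \<open>\<Lambda> = \<omega> / (2 \<delta>\<^sup>2)\<close> is convex up to an additive error \<open>\<omega>\<close>.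
  By Carath\'eodory such a function dominates an affine function that is exact at \<open>m\<close> up to
  \<open>(d + 1) \<omega>\<close>, which yields an approximate Jensen inequality
  \<open>\<bar>L f - f m\<bar> \<le> (d + 1) \<omega> + \<Lambda> L \<parallel>\<cdot> - m\<parallel>\<^sup>2\<close> for every positive normalised functional \<open>L\<close>
  with barycenter \<open>m\<close>. For \<open>L = C\<^sub>n(\<cdot>)(x)\<close> the barycenter is \<open>m = (n x + a x') / (n + a)\<close>: the
  representing measure of \<open>T\<close> at \<open>x\<close> has barycenter \<open>x\<close> because \<open>T\<close> fixes affine functions, and
  \<open>x'\<close> is the barycenter of \<open>\<mu>\<^sub>n\<close>. Approximate convexity along the segment from \<open>x\<close> to \<open>x'\<close>
  bounds \<open>\<bar>f m - f x\<bar>\<close>, and independence of the \<open>n\<close> sample points gives \<open>L \<parallel>\<cdot> - m\<parallel>\<^sup>2 = O(1 / (n + a))\<close>.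
  Taking \<open>\<delta>\<^sup>2 = 1 / (n + a)\<close> makes every error term \<open>O(\<omega> + \<parallel>f\<parallel> / (n + a))\<close>.
\<close>

section \<open>Approximate convexity from bounded second differences\<close>

definition approx_convex_on :: "'a::real_vector set \<Rightarrow> real \<Rightarrow> ('a \<Rightarrow> real) \<Rightarrow> bool" where
  "approx_convex_on K \<epsilon> F \<longleftrightarrow>
     (\<forall>u\<in>K. \<forall>v\<in>K. \<forall>t. 0 \<le> t \<longrightarrow> t \<le> 1 \<longrightarrow> F ((1 - t) *\<^sub>R u + t *\<^sub>R v) \<le> (1 - t) * F u + t * F v + \<epsilon>)"

lemma max_le_of_second_difference_bound:
  fixes g :: "real \<Rightarrow> real"
  assumes cont: "continuous_on {0..1} g" and ends: "g 0 = 0" "g 1 = 0"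
    and r: "r > 0" and c: "c \<ge> 0" "\<omega> < c * r\<^sup>2"
    and diff: "\<And>s h. 0 \<le> h \<Longrightarrow> h \<le> s \<Longrightarrow> s + h \<le> 1 \<Longrightarrow> h \<le> r \<Longrightarrow>
                 c * h\<^sup>2 - \<omega> \<le> g (s - h) + g (s + h) - 2 * g s"
    and t: "t \<in> {0..1}"
  shows "g t \<le> \<omega>"
proof -
  \<comment> \<open>At a maximiser the second difference is nonpositive, which rules out the full step \<open>h = r\<close>;
    so the step reaches an endpoint, where \<open>g\<close> vanishes.\<close>
  obtain s where s: "s \<in> {0..1}" and max: "\<And>u. u \<in> {0..1} \<Longrightarrow> g u \<le> g s"
    using continuous_attains_sup[OF compact_Icc _ cont] by fastforce
  define h where "h = min (min s (1 - s)) r"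
  have h: "0 \<le> h" "h \<le> s" "s + h \<le> 1" "h \<le> r" using s r by (auto simp: h_def)
  then have in01: "s - h \<in> {0..1}" "s + h \<in> {0..1}" by auto
  have "0 \<le> c * h\<^sup>2" using c by simp
  have "g s \<le> \<omega>"
  proof -
    consider "h = r" | "h = s" | "h = 1 - s" unfolding h_def by linarith
    then show ?thesis
    proof cases
      case 1
      then show ?thesis using diff[OF h] max[OF in01(1)] max[OF in01(2)] c by simp
    next
      case 2
      then show ?thesis using diff[OF h] max[OF in01(2)] ends \<open>0 \<le> c * h\<^sup>2\<close> by simp
    next
      case 3
      then show ?thesis using diff[OF h] max[OF in01(1)] ends \<open>0 \<le> c * h\<^sup>2\<close> by simp
    qed
  qed
  then show ?thesis using max[OF t] by simp
qed

lemma segment_bound_of_second_difference_bound_strict: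
  fixes f :: "'a::real_normed_vector \<Rightarrow> real"
  assumes K: "convex K" and f: "continuous_on K f" and \<delta>: "\<delta> > 0" and \<Lambda>: "\<omega> < 2 * \<Lambda> * \<delta>\<^sup>2"
    and second: "\<And>x y. x \<in> K \<Longrightarrow> y \<in> K \<Longrightarrow> norm (x - y) \<le> 2 * \<delta> \<Longrightarrow>
                   -\<omega> \<le> f x - 2 * f ((1/2) *\<^sub>R (x + y)) + f y"
    and u: "u \<in> K" and v: "v \<in> K" and t: "0 \<le> t" "t \<le> 1"
  shows "f ((1 - t) *\<^sub>R u + t *\<^sub>R v) \<le> (1 - t) * f u + t * f v + \<omega> + \<Lambda> * (t * (1 - t) * (norm (u - v))\<^sup>2)"
proof (cases "u = v")
  case True
  with second[OF u u] \<delta> show ?thesis by (simp add: algebra_simps flip: scaleR_add_left)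
next
  case False
  define D where "D = norm (u - v)"
  define p where "p s = (1 - s) *\<^sub>R u + s *\<^sub>R v" for s :: real
  define g where "g s = f (p s) - (1 - s) * f u - s * f v - \<Lambda> * (s * (1 - s) * D\<^sup>2)" for s
  have D: "D > 0" using False by (simp add: D_def)
  have pK: "p s \<in> K" if "s \<in> {0..1}" for s
    using that K u v unfolding p_def by (auto intro: convexD_alt)
  have "0 \<le> \<omega>" using second[OF u u] \<delta> by simp
  with \<Lambda> have "0 < 2 * \<Lambda> * \<delta>\<^sup>2" by linarith
  then have c: "0 \<le> 2 * \<Lambda> * D\<^sup>2" using \<delta> by (simp add: zero_less_mult_iff)
  have \<omega>: "\<omega> < (2 * \<Lambda> * D\<^sup>2) * (\<delta> / D)\<^sup>2" using \<Lambda> D by (simp add: power_divide)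
  have "g t \<le> \<omega>"
  proof (rule max_le_of_second_difference_bound[where g = g, OF _ _ _ _ c \<omega>])
    show "continuous_on {0..1} g"
      unfolding g_def p_def using pK[unfolded p_def]
      by (intro continuous_intros continuous_on_compose2[OF f]) auto
    show "g 0 = 0" "g 1 = 0" by (simp_all add: g_def p_def)
    show "\<delta> / D > 0" using \<delta> D by simp
    show "t \<in> {0..1}" using t by simp
    fix s h :: real assume h: "0 \<le> h" "h \<le> s" "s + h \<le> 1" "h \<le> \<delta> / D"
    have "p (s - h) - p (s + h) = (2 * h) *\<^sub>R (u - v)"
      unfolding p_def by (simp add: algebra_simps scaleR_2 flip: scaleR_scaleR)
    then have "norm (p (s - h) - p (s + h)) = 2 * h * D" using h(1) by (simp add: D_def)
    also have "\<dots> \<le> 2 * \<delta>" using h(4) D by (simp add: field_simps)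
    finally have "-\<omega> \<le> f (p (s - h)) - 2 * f ((1/2) *\<^sub>R (p (s - h) + p (s + h))) + f (p (s + h))"
      using second[OF pK pK] h by simp
    moreover have "p (s - h) + p (s + h) = 2 *\<^sub>R p s"
      unfolding p_def by (simp add: algebra_simps scaleR_2 flip: scaleR_scaleR)
    ultimately have "-\<omega> \<le> f (p (s - h)) - 2 * f (p s) + f (p (s + h))" by simp
    then show "2 * \<Lambda> * D\<^sup>2 * h\<^sup>2 - \<omega> \<le> g (s - h) + g (s + h) - 2 * g s"
      by (simp add: g_def algebra_simps power2_eq_square)
  qed
  then show ?thesis by (simp add: g_def p_def D_def)
qed

lemma segment_bound_of_second_difference_bound:
  fixes f :: "'a::real_normed_vector \<Rightarrow> real"
  assumes K: "convex K" and f: "continuous_on K f" and \<delta>: "\<delta> > 0" and \<Lambda>: "\<omega> \<le> 2 * \<Lambda> * \<delta>\<^sup>2"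
    and second: "\<And>x y. x \<in> K \<Longrightarrow> y \<in> K \<Longrightarrow> norm (x - y) \<le> 2 * \<delta> \<Longrightarrow>
                   -\<omega> \<le> f x - 2 * f ((1/2) *\<^sub>R (x + y)) + f y"
    and u: "u \<in> K" and v: "v \<in> K" and t: "0 \<le> t" "t \<le> 1"
  shows "f ((1 - t) *\<^sub>R u + t *\<^sub>R v) \<le> (1 - t) * f u + t * f v + \<omega> + \<Lambda> * (t * (1 - t) * (norm (u - v))\<^sup>2)"
proof (rule field_le_epsilon)
  fix e :: real assume e: "e > 0"
  define E where "E = t * (1 - t) * (norm (u - v))\<^sup>2"
  have E: "0 \<le> E" using t by (simp add: E_def)
  have "0 < 2 * (e / (E + 1)) * \<delta>\<^sup>2" using e E \<delta> by (intro mult_pos_pos divide_pos_pos) auto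
  moreover have "2 * (\<Lambda> + e / (E + 1)) * \<delta>\<^sup>2 = 2 * \<Lambda> * \<delta>\<^sup>2 + 2 * (e / (E + 1)) * \<delta>\<^sup>2"
    by (simp add: algebra_simps)
  ultimately have "\<omega> < 2 * (\<Lambda> + e / (E + 1)) * \<delta>\<^sup>2" using \<Lambda> by linarith
  from segment_bound_of_second_difference_bound_strict[OF K f \<delta> this second u v t]
  have "f ((1 - t) *\<^sub>R u + t *\<^sub>R v) \<le> (1 - t) * f u + t * f v + \<omega> + (\<Lambda> + e / (E + 1)) * E"
    by (simp add: E_def)
  moreover have "e / (E + 1) * E \<le> e" using e E by (simp add: field_simps)
  ultimately show "f ((1 - t) *\<^sub>R u + t *\<^sub>R v) \<le> (1 - t) * f u + t * f v + \<omega> + \<Lambda> * (t * (1 - t) * (norm (u - v))\<^sup>2) + e"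
    unfolding E_def[symmetric] by (simp add: distrib_right)
qed

lemma abs_segment_bound_of_second_difference_bound:
  fixes f :: "'a::real_normed_vector \<Rightarrow> real"
  assumes K: "convex K" and f: "continuous_on K f" and \<delta>: "\<delta> > 0" and \<Lambda>: "\<omega> \<le> 2 * \<Lambda> * \<delta>\<^sup>2"
    and second: "\<And>x y. x \<in> K \<Longrightarrow> y \<in> K \<Longrightarrow> norm (x - y) \<le> 2 * \<delta> \<Longrightarrow>
                   \<bar>f x - 2 * f ((1/2) *\<^sub>R (x + y)) + f y\<bar> \<le> \<omega>"
    and u: "u \<in> K" and v: "v \<in> K" and t: "0 \<le> t" "t \<le> 1"
  shows "\<bar>f ((1 - t) *\<^sub>R u + t *\<^sub>R v) - ((1 - t) * f u + t * f v)\<bar>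
      \<le> \<omega> + \<Lambda> * (t * (1 - t) * (norm (u - v))\<^sup>2)"
proof -
  have lower: "-\<omega> \<le> f x - 2 * f ((1/2) *\<^sub>R (x + y)) + f y"
    and upper: "-\<omega> \<le> - f x - 2 * (- f ((1/2) *\<^sub>R (x + y))) + - f y"
    if "x \<in> K" "y \<in> K" "norm (x - y) \<le> 2 * \<delta>" for x y
    using second[OF that] by (simp_all add: abs_le_iff)
  have "f ((1 - t) *\<^sub>R u + t *\<^sub>R v) \<le> (1 - t) * f u + t * f v + \<omega> + \<Lambda> * (t * (1 - t) * (norm (u - v))\<^sup>2)"
    by (rule segment_bound_of_second_difference_bound[OF K f \<delta> \<Lambda> lower u v t])
  moreover have "- f ((1 - t) *\<^sub>R u + t *\<^sub>R v)
      \<le> (1 - t) * (- f u) + t * (- f v) + \<omega> + \<Lambda> * (t * (1 - t) * (norm (u - v))\<^sup>2)"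
    using f by (intro segment_bound_of_second_difference_bound[OF K _ \<delta> \<Lambda> upper u v t] continuous_intros)
  ultimately show ?thesis by (simp add: abs_le_iff)
qed

lemma norm_convex_combination_diff_power2:
  fixes u v m :: "'a::real_inner"
  shows "(norm ((1 - t) *\<^sub>R u + t *\<^sub>R v - m))\<^sup>2 + t * (1 - t) * (norm (u - v))\<^sup>2
       = (1 - t) * (norm (u - m))\<^sup>2 + t * (norm (v - m))\<^sup>2"
proof -
  have "(1 - t) *\<^sub>R u + t *\<^sub>R v - m = (1 - t) *\<^sub>R (u - m) + t *\<^sub>R (v - m)"
    by (simp add: algebra_simps)
  moreover have "u - v = (u - m) - (v - m)" by simp
  ultimately show ?thesis
    by (simp add: power2_norm_eq_inner inner_diff_left inner_diff_right inner_add_left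
        inner_add_right inner_commute[of "v - m" "u - m"] algebra_simps)
qed

lemma approx_convex_on_add_quadratic:
  fixes f :: "'a::real_inner \<Rightarrow> real"
  assumes K: "convex K" and f: "continuous_on K f" and \<delta>: "\<delta> > 0" and \<Lambda>: "\<omega> \<le> 2 * \<Lambda> * \<delta>\<^sup>2"
    and second: "\<And>x y. x \<in> K \<Longrightarrow> y \<in> K \<Longrightarrow> norm (x - y) \<le> 2 * \<delta> \<Longrightarrow>
                   -\<omega> \<le> f x - 2 * f ((1/2) *\<^sub>R (x + y)) + f y"
  shows "approx_convex_on K \<omega> (\<lambda>z. f z + \<Lambda> * (norm (z - m))\<^sup>2)"
  unfolding approx_convex_on_def
proof (intro ballI allI impI)
  fix u v and t :: real assume u: "u \<in> K" and v: "v \<in> K" and t: "0 \<le> t" "t \<le> 1"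
  let ?p = "(1 - t) *\<^sub>R u + t *\<^sub>R v"
  have "f ?p \<le> (1 - t) * f u + t * f v + \<omega> + \<Lambda> * (t * (1 - t) * (norm (u - v))\<^sup>2)"
    by (rule segment_bound_of_second_difference_bound[OF K f \<delta> \<Lambda> second u v t])
  moreover have "\<Lambda> * ((norm (?p - m))\<^sup>2 + t * (1 - t) * (norm (u - v))\<^sup>2)
      = \<Lambda> * ((1 - t) * (norm (u - m))\<^sup>2 + t * (norm (v - m))\<^sup>2)"
    by (simp only: norm_convex_combination_diff_power2)
  ultimately show "f ?p + \<Lambda> * (norm (?p - m))\<^sup>2
      \<le> (1 - t) * (f u + \<Lambda> * (norm (u - m))\<^sup>2) + t * (f v + \<Lambda> * (norm (v - m))\<^sup>2) + \<omega>"
    by (simp add: algebra_simps)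
qed

lemma approx_convex_on_convex_hull_graph:
  fixes F :: "'a::real_vector \<Rightarrow> real"
  assumes K: "convex K" and \<epsilon>: "\<epsilon> \<ge> 0" and F: "approx_convex_on K \<epsilon> F"
    and S: "finite S" "S \<noteq> {}" "S \<subseteq> (\<lambda>z. (z, F z)) ` K"
    and p: "p \<in> convex hull S"
  shows "fst p \<in> K \<and> F (fst p) \<le> snd p + (real (card S) - 1) * \<epsilon>"
  using S p
proof (induction S arbitrary: p rule: finite_ne_induct)
  case (singleton q)
  then show ?case by auto
next
  case (insert q S)
  obtain z where z: "z \<in> K" "q = (z, F z)" using insert.prems by auto
  obtain s b where s: "0 \<le> s" "s \<le> 1" and b: "b \<in> convex hull S"
    and p: "p = (1 - s) *\<^sub>R q + s *\<^sub>R b"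
    using insert.prems(2) convex_hull_insert[OF insert.hyps(2)] by fastforce
  have bK: "fst b \<in> K" and Fb: "F (fst b) \<le> snd b + (real (card S) - 1) * \<epsilon>"
    using insert.IH[OF _ b] insert.prems by auto
  have card: "real (card (insert q S)) = real (card S) + 1" "1 \<le> real (card S)"
    using insert.hyps by (auto simp: Suc_leI card_gt_0_iff)
  have fst_p: "fst p = (1 - s) *\<^sub>R z + s *\<^sub>R fst b" and snd_p: "snd p = (1 - s) * F z + s * snd b"
    using p z by simp_all
  have "F ((1 - s) *\<^sub>R z + s *\<^sub>R fst b) \<le> (1 - s) * F z + s * F (fst b) + \<epsilon>"
    using F z bK s unfolding approx_convex_on_def by blast
  moreover have "s * F (fst b) \<le> s * snd b + s * ((real (card S) - 1) * \<epsilon>)"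
    using mult_left_mono[OF Fb s(1)] by (simp add: algebra_simps)
  moreover have "s * ((real (card S) - 1) * \<epsilon>) \<le> (real (card S) - 1) * \<epsilon>"
    using card \<epsilon> s by (intro mult_left_le_one_le) auto
  moreover have "(real (card (insert q S)) - 1) * \<epsilon> = (real (card S) - 1) * \<epsilon> + \<epsilon>"
    using card by (simp add: algebra_simps)
  ultimately show ?case
    unfolding fst_p snd_p using convexD_alt[OF K z(1) bK s] by linarith
qed

lemma approx_convex_on_affine_minorant:
  fixes F :: "'a::euclidean_space \<Rightarrow> real"
  assumes K: "convex K" "compact K" and F: "continuous_on K F" "approx_convex_on K \<epsilon> F"
    and \<epsilon>: "\<epsilon> \<ge> 0" and m: "m \<in> K" and \<eta>: "\<eta> > 0"
  obtains w c where "\<And>z. z \<in> K \<Longrightarrow> inner w z + c \<le> F z"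
    and "F m - (real DIM('a) + 1) * \<epsilon> - \<eta> \<le> inner w m + c"
proof -
  define G where "G = (\<lambda>z. (z, F z)) ` K"
  have "compact G" unfolding G_def
    by (intro compact_continuous_image K continuous_on_Pair continuous_on_id F)
  then have G: "convex (convex hull G)" "closed (convex hull G)"
    by (simp_all add: compact_imp_closed compact_convex_hull)
  \<comment> \<open>By Carath\'eodory in \<open>'a \<times> real\<close>, at most \<open>DIM('a) + 2\<close> graph points are needed.\<close>
  have hull_above: "F (fst p) \<le> snd p + (real DIM('a) + 1) * \<epsilon>" if p: "p \<in> convex hull G" for p
  proof -
    obtain S where S: "finite S" "S \<subseteq> G" "card S \<le> DIM('a \<times> real) + 1" "p \<in> convex hull S"
      using p caratheodory[of G] by auto
    then have "F (fst p) \<le> snd p + (real (card S) - 1) * \<epsilon>"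
      using approx_convex_on_convex_hull_graph[OF K(1) \<epsilon> F(2) S(1)] G_def by fastforce
    moreover have "(real (card S) - 1) * \<epsilon> \<le> (real DIM('a) + 1) * \<epsilon>"
      using S(3) \<epsilon> by (intro mult_right_mono) auto
    ultimately show ?thesis by linarith
  qed
  define q where "q = (m, F m - (real DIM('a) + 1) * \<epsilon> - \<eta>)"
  have "q \<notin> convex hull G" using hull_above[of q] \<eta> by (auto simp: q_def)
  then obtain A b where Ab: "inner A q < b" "\<And>p. p \<in> convex hull G \<Longrightarrow> b < inner A p"
    using separating_hyperplane_closed_point[OF G] by blast
  obtain w0 c0 where A: "A = (w0, c0)" by fastforce
  have graph: "b < inner w0 z + c0 * F z" if "z \<in> K" for z
    using Ab(2)[of "(z, F z)"] that A by (auto simp: G_def inner_prod_def intro: hull_inc)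
  have below: "inner w0 m + c0 * (F m - (real DIM('a) + 1) * \<epsilon> - \<eta>) < b"
    using Ab(1) A by (simp add: inner_prod_def q_def)
  have "0 < c0 * ((real DIM('a) + 1) * \<epsilon> + \<eta>)"
    using graph[OF m] below by (simp add: algebra_simps)
  moreover have "0 < (real DIM('a) + 1) * \<epsilon> + \<eta>" using \<epsilon> \<eta> by (simp add: add_nonneg_pos)
  ultimately have c0: "c0 > 0" by (simp add: zero_less_mult_iff)
  show ?thesis
  proof
    show "inner ((-1 / c0) *\<^sub>R w0) z + b / c0 \<le> F z" if "z \<in> K" for z
      using graph[OF that] c0 by (simp add: field_simps)
    show "F m - (real DIM('a) + 1) * \<epsilon> - \<eta> \<le> inner ((-1 / c0) *\<^sub>R w0) m + b / c0"
      using below c0 by (simp add: field_simps)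
  qed
qed

section \<open>An approximate Jensen inequality\<close>

locale positive_linear_functional =
  fixes K :: "'a::euclidean_space set" and L :: "('a \<Rightarrow> real) \<Rightarrow> real"
  assumes linear: "continuous_on K g \<Longrightarrow> continuous_on K h \<Longrightarrow> L (\<lambda>z. c * g z + h z) = c * L g + L h"
    and mono: "continuous_on K g \<Longrightarrow> continuous_on K h \<Longrightarrow> (\<And>z. z \<in> K \<Longrightarrow> g z \<le> h z) \<Longrightarrow> L g \<le> L h"
begin

lemma uminus: "continuous_on K g \<Longrightarrow> L (\<lambda>z. - g z) = - L g"
  using linear[of g "\<lambda>_. 0" "-1"] linear[of "\<lambda>_. 0" "\<lambda>_. 0" 1] by simp

lemma approx_jensen:
  fixes h :: "'a \<Rightarrow> real"
  assumes K: "convex K" "compact K" and m: "m \<in> K"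
    and barycenter: "\<And>w c. L (\<lambda>z. inner w z + c) = inner w m + c"
    and h: "continuous_on K h" and \<epsilon>: "\<epsilon> \<ge> 0"
    and convex: "approx_convex_on K \<epsilon> (\<lambda>z. h z + \<Lambda> * (norm (z - m))\<^sup>2)"
  shows "h m - (real DIM('a) + 1) * \<epsilon> \<le> L h + \<Lambda> * L (\<lambda>z. (norm (z - m))\<^sup>2)"
proof (rule field_le_epsilon)
  fix \<eta> :: real assume \<eta>: "\<eta> > 0"
  have q: "continuous_on K (\<lambda>z. (norm (z - m))\<^sup>2)" by (intro continuous_intros)
  have "continuous_on K (\<lambda>z. h z + \<Lambda> * (norm (z - m))\<^sup>2)" by (intro continuous_intros h)
  then obtain w c where minorant: "\<And>z. z \<in> K \<Longrightarrow> inner w z + c \<le> h z + \<Lambda> * (norm (z - m))\<^sup>2"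
    and at_m: "h m - (real DIM('a) + 1) * \<epsilon> - \<eta> \<le> inner w m + c"
    using approx_convex_on_affine_minorant[OF K _ convex \<epsilon> m \<eta>] by auto
  have affine: "continuous_on K (\<lambda>z. inner w z + c)" by (intro continuous_intros)
  have "L (\<lambda>z. (- \<Lambda>) * (norm (z - m))\<^sup>2 + (inner w z + c))
      = (- \<Lambda>) * L (\<lambda>z. (norm (z - m))\<^sup>2) + (inner w m + c)"
    unfolding linear[OF q affine] barycenter ..
  then have "inner w m + c - \<Lambda> * L (\<lambda>z. (norm (z - m))\<^sup>2)
      = L (\<lambda>z. (- \<Lambda>) * (norm (z - m))\<^sup>2 + (inner w z + c))"
    by simp
  also have "\<dots> \<le> L h"
    using minorant by (intro mono continuous_intros h) (simp add: algebra_simps)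
  finally show "h m - (real DIM('a) + 1) * \<epsilon> \<le> L h + \<Lambda> * L (\<lambda>z. (norm (z - m))\<^sup>2) + \<eta>"
    using at_m by linarith
qed

lemma abs_diff_le_of_second_difference_bound:
  fixes f :: "'a \<Rightarrow> real"
  assumes K: "convex K" "compact K" and m: "m \<in> K"
    and barycenter: "\<And>w c. L (\<lambda>z. inner w z + c) = inner w m + c"
    and f: "continuous_on K f" and \<delta>: "\<delta> > 0" and \<Lambda>: "\<omega> \<le> 2 * \<Lambda> * \<delta>\<^sup>2"
    and second: "\<And>x y. x \<in> K \<Longrightarrow> y \<in> K \<Longrightarrow> norm (x - y) \<le> 2 * \<delta> \<Longrightarrow>
                   \<bar>f x - 2 * f ((1/2) *\<^sub>R (x + y)) + f y\<bar> \<le> \<omega>"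
  shows "\<bar>L f - f m\<bar> \<le> (real DIM('a) + 1) * \<omega> + \<Lambda> * L (\<lambda>z. (norm (z - m))\<^sup>2)"
proof -
  have \<omega>: "0 \<le> \<omega>" using second[OF m m] \<delta> by simp
  have lower: "-\<omega> \<le> f x - 2 * f ((1/2) *\<^sub>R (x + y)) + f y"
    and upper: "-\<omega> \<le> - f x - 2 * (- f ((1/2) *\<^sub>R (x + y))) + - f y"
    if "x \<in> K" "y \<in> K" "norm (x - y) \<le> 2 * \<delta>" for x y
    using second[OF that] by (simp_all add: abs_le_iff)
  have "f m - (real DIM('a) + 1) * \<omega> \<le> L f + \<Lambda> * L (\<lambda>z. (norm (z - m))\<^sup>2)"
    by (intro approx_jensen[OF K m barycenter f \<omega>] approx_convex_on_add_quadratic[OF K(1) f \<delta> \<Lambda> lower])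
  moreover have "- f m - (real DIM('a) + 1) * \<omega> \<le> L (\<lambda>z. - f z) + \<Lambda> * L (\<lambda>z. (norm (z - m))\<^sup>2)"
    using f by (intro approx_jensen[OF K m barycenter _ \<omega>] approx_convex_on_add_quadratic[OF K(1) _ \<delta> \<Lambda> upper]
        continuous_intros)
  ultimately show ?thesis using uminus[OF f] by linarith
qed

end

lemma space_borel_prob_on:
  assumes "borel_prob_on K M"
  shows "space M = K"
proof -
  have "space M = space (restrict_space borel K)"
    using assms unfolding borel_prob_on_def by (intro sets_eq_imp_space_eq) simp
  then show ?thesis by (simp add: space_restrict_space)
qed

lemma borel_measurable_continuous_on_borel_prob:
  fixes g :: "'a::euclidean_space \<Rightarrow> 'b::topological_space"
  assumes "borel_prob_on K M" "continuous_on K g"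
  shows "g \<in> borel_measurable M"
  using assms borel_measurable_continuous_on_restrict measurable_cong_sets
  unfolding borel_prob_on_def by blast

lemma integrable_continuous_on_borel_prob:
  fixes g :: "'a::euclidean_space \<Rightarrow> real"
  assumes M: "borel_prob_on K M" and K: "compact K" and g: "continuous_on K g"
  shows "integrable M g"
proof -
  interpret prob_space M using M by (simp add: borel_prob_on_def)
  obtain B where "\<And>z. z \<in> K \<Longrightarrow> norm (g z) \<le> B" using continuous_on_compact_bound[OF K g] by blast
  then show ?thesis
    using borel_measurable_continuous_on_borel_prob[OF M g] space_borel_prob_on[OF M]
    by (intro integrable_const_bound[of _ B]) auto
qed

definition barycenter :: "'a::euclidean_space measure \<Rightarrow> 'a" where
  "barycenter M = (\<Sum>b\<in>Basis. (\<integral>y. inner y b \<partial>M) *\<^sub>R b)"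

lemma integral_inner_barycenter:
  fixes M :: "'a::euclidean_space measure"
  assumes "borel_prob_on K M" "compact K"
  shows "(\<integral>y. inner w y \<partial>M) = inner w (barycenter M)"
proof -
  have "integrable M (\<lambda>y. inner y b)" for b
    using assms by (intro integrable_continuous_on_borel_prob continuous_intros)
  then have "(\<integral>y. inner w y \<partial>M) = (\<Sum>b\<in>Basis. inner w b * (\<integral>y. inner y b \<partial>M))"
    by (subst euclidean_inner) (simp add: inner_commute)
  then show ?thesis by (simp add: barycenter_def inner_sum_right mult.commute)
qed

lemma barycenter_in:
  fixes M :: "'a::euclidean_space measure"
  assumes M: "borel_prob_on K M" and K: "convex K" "compact K"
  shows "barycenter M \<in> K"
proof (rule ccontr)
  assume "barycenter M \<notin> K"
  then obtain w c where w: "inner w (barycenter M) < c" "\<And>y. y \<in> K \<Longrightarrow> c < inner w y"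
    using separating_hyperplane_closed_point[OF K(1) compact_imp_closed[OF K(2)]] by blast
  interpret prob_space M using M by (simp add: borel_prob_on_def)
  have "c \<le> (\<integral>y. inner w y \<partial>M)"
    using w(2) space_borel_prob_on[OF M]
    by (intro integral_ge_const integrable_continuous_on_borel_prob[OF M K(2)] continuous_intros AE_I2)
      (auto intro: less_imp_le)
  then show False using w(1) integral_inner_barycenter[OF M K(2)] by simp
qed

lemma barycenter_eqI:
  fixes M :: "'a::euclidean_space measure"
  assumes "borel_prob_on K M" "compact K" "\<And>w. (\<integral>y. inner w y \<partial>M) = inner w x"
  shows "barycenter M = x"
proof (rule euclidean_eqI)
  fix b :: 'a
  show "inner (barycenter M) b = inner x b"
    using assms(3)[of b] integral_inner_barycenter[OF assms(1,2), of b] by (simp add: inner_commute)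
qed

lemma
  fixes N :: "'b measure" and g :: "'b \<Rightarrow> real"
  assumes N: "prob_space N" and g: "integrable N g" and i: "i \<in> I"
  shows integrable_PiM_coordinate: "integrable (PiM I (\<lambda>_. N)) (\<lambda>xs. g (xs i))"
    and integral_PiM_coordinate: "(\<integral>xs. g (xs i) \<partial>PiM I (\<lambda>_. N)) = integral\<^sup>L N g"
proof -
  have distr: "distr (PiM I (\<lambda>_. N)) N (\<lambda>xs. xs i) = N"
    using distr_PiM_component[of I "\<lambda>_. N" i] N i by simp
  have meas: "(\<lambda>xs. xs i) \<in> measurable (PiM I (\<lambda>_. N)) N"
    using measurable_component_singleton[OF i] .
  show "integrable (PiM I (\<lambda>_. N)) (\<lambda>xs. g (xs i))"
    using integrable_distr_eq[OF meas borel_measurable_integrable[OF g]] g distr by simp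
  show "(\<integral>xs. g (xs i) \<partial>PiM I (\<lambda>_. N)) = integral\<^sup>L N g"
    using integral_distr[OF meas borel_measurable_integrable[OF g]] distr by simp
qed

lemma
  fixes N :: "'b measure" and g h :: "'b \<Rightarrow> real"
  assumes N: "prob_space N" and g: "integrable N g" and h: "integrable N h"
    and I: "finite I" and ij: "i \<in> I" "j \<in> I" "i \<noteq> j"
  shows integrable_PiM_coordinate_pair: "integrable (PiM I (\<lambda>_. N)) (\<lambda>xs. g (xs i) * h (xs j))"
    and integral_PiM_coordinate_pair:
      "(\<integral>xs. g (xs i) * h (xs j) \<partial>PiM I (\<lambda>_. N)) = integral\<^sup>L N g * integral\<^sup>L N h"
proof -
  interpret N: prob_space N by (rule N)
  interpret product_sigma_finite "\<lambda>_. N"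
    by (simp add: product_sigma_finite_def N.sigma_finite_measure_axioms)
  define F where "F k = (if k = i then g else if k = j then h else (\<lambda>_. 1))" for k
  have F: "integrable N (F k)" for k using g h by (simp add: F_def)
  have "(\<Prod>k\<in>I. c k) = c i * c j" if "\<And>k. k \<in> I \<Longrightarrow> k \<noteq> i \<Longrightarrow> k \<noteq> j \<Longrightarrow> c k = 1"
    for c :: "'a \<Rightarrow> real"
    using that I ij by (simp add: prod.remove[of I i] prod.remove[of "I - {i}" j] prod.neutral)
  then have prod: "(\<Prod>k\<in>I. F k (xs k)) = g (xs i) * h (xs j)"
    and prod_integral: "(\<Prod>k\<in>I. integral\<^sup>L N (F k)) = integral\<^sup>L N g * integral\<^sup>L N h" for xs
    using ij by (simp_all add: F_def N.prob_space)
  show "integrable (PiM I (\<lambda>_. N)) (\<lambda>xs. g (xs i) * h (xs j))"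
    using product_integrable_prod[where f = F, OF I F] by (simp add: prod)
  show "(\<integral>xs. g (xs i) * h (xs j) \<partial>PiM I (\<lambda>_. N)) = integral\<^sup>L N g * integral\<^sup>L N h"
    using product_integral_prod[where f = F, OF I F] by (simp add: prod prod_integral)
qed

section \<open>The operator \<open>C\<^sub>n\<close> at a point\<close>

locale iterated_integral =
  fixes K :: "'a::euclidean_space set" and P :: "'p measure" and Q :: "'q measure"
    and Z :: "'p \<Rightarrow> 'q \<Rightarrow> 'a"
  assumes compact: "compact K" and prob_P: "prob_space P" and prob_Q: "prob_space Q"
    and Z_measurable: "(\<lambda>(p, q). Z p q) \<in> borel_measurable (P \<Otimes>\<^sub>M Q)"
    and Z_in: "\<And>p q. p \<in> space P \<Longrightarrow> q \<in> space Q \<Longrightarrow> Z p q \<in> K"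
begin

definition avg :: "('a \<Rightarrow> real) \<Rightarrow> real" where
  "avg g = (\<integral>p. (\<integral>q. g (Z p q) \<partial>Q) \<partial>P)"

lemma borel_measurable_comp_Z:
  assumes g: "continuous_on K g"
  shows "(\<lambda>(p, q). g (Z p q)) \<in> borel_measurable (P \<Otimes>\<^sub>M Q)"
proof -
  have "(\<lambda>(p, q). Z p q) \<in> measurable (P \<Otimes>\<^sub>M Q) (restrict_space borel K)"
    using Z_measurable Z_in by (intro measurable_restrict_space2) (auto simp: space_pair_measure)
  from measurable_comp[OF this borel_measurable_continuous_on_restrict[OF g]] show ?thesis
    by (simp add: comp_def case_prod_beta')
qed

lemma
  fixes g :: "'a \<Rightarrow> real"
  assumes g: "continuous_on K g"
  shows integrable_inner: "p \<in> space P \<Longrightarrow> integrable Q (\<lambda>q. g (Z p q))"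
    and integrable_outer: "integrable P (\<lambda>p. \<integral>q. g (Z p q) \<partial>Q)"
proof -
  interpret P: prob_space P by (rule prob_P)
  interpret Q: prob_space Q by (rule prob_Q)
  obtain B where B: "\<And>z. z \<in> K \<Longrightarrow> \<bar>g z\<bar> \<le> B" using continuous_on_compact_bound[OF compact g] by auto
  have meas: "(\<lambda>x. g (Z (fst x) (snd x))) \<in> borel_measurable (P \<Otimes>\<^sub>M Q)"
    using borel_measurable_comp_Z[OF g] by (simp add: case_prod_beta')
  show inner: "integrable Q (\<lambda>q. g (Z p q))" if p: "p \<in> space P" for p
    using measurable_Pair2[OF meas p] B Z_in[OF p] by (intro Q.integrable_const_bound[of _ B]) auto
  have "\<bar>\<integral>q. g (Z p q) \<partial>Q\<bar> \<le> B" if p: "p \<in> space P" for p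
    using Q.integral_le_const[OF inner[OF p], of B] Q.integral_ge_const[OF inner[OF p], of "- B"]
      B Z_in[OF p] by (force simp: abs_le_iff)
  then show "integrable P (\<lambda>p. \<integral>q. g (Z p q) \<partial>Q)"
    using Q.borel_measurable_lebesgue_integral[OF borel_measurable_comp_Z[OF g]] by (intro P.integrable_const_bound[of _ B]) auto
qed

sublocale positive_linear_functional K avg
proof
  fix g h :: "'a \<Rightarrow> real" and c :: real
  assume g: "continuous_on K g" and h: "continuous_on K h"
  have "avg (\<lambda>z. c * g z + h z) = (\<integral>p. c * (\<integral>q. g (Z p q) \<partial>Q) + (\<integral>q. h (Z p q) \<partial>Q) \<partial>P)"
    unfolding avg_def
    by (intro Bochner_Integration.integral_cong) (simp_all add: integrable_inner[OF g] integrable_inner[OF h])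
  also have "\<dots> = c * avg g + avg h"
    unfolding avg_def by (simp add: integrable_outer[OF g] integrable_outer[OF h])
  finally show "avg (\<lambda>z. c * g z + h z) = c * avg g + avg h" .
  assume le: "\<And>z. z \<in> K \<Longrightarrow> g z \<le> h z"
  show "avg g \<le> avg h"
    unfolding avg_def using integrable_inner[OF g] integrable_inner[OF h] le Z_in
    by (intro integral_mono integrable_outer g h) auto
qed

end

lemma norm_add_power2_le: "(norm (u + v))\<^sup>2 \<le> 2 * (norm u)\<^sup>2 + 2 * (norm v)\<^sup>2"
proof -
  have "(norm (u + v))\<^sup>2 \<le> (norm u + norm v)\<^sup>2" by (rule power_mono[OF norm_triangle_ineq]) simp
  also have "\<dots> \<le> 2 * (norm u)\<^sup>2 + 2 * (norm v)\<^sup>2"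
    using sum_squares_bound[of "norm u" "norm v"] by (simp add: power2_sum)
  finally show ?thesis .
qed

text \<open>\<open>N\<close> and \<open>Q\<close> stand for \<open>\<tilde>\<mu>\<^sub>x\<^sup>T\<close> and \<open>\<mu>\<^sub>n\<close>; the functional \<open>avg\<close> below is \<open>f \<mapsto> C\<^sub>n(f)(x)\<close>.\<close>

locale Cn_point =
  fixes K :: "'a::euclidean_space set" and N Q :: "'a measure" and n :: nat and a :: real and x :: 'a
  assumes convex: "convex K" and compact: "compact K"
    and borel_N: "borel_prob_on K N" and borel_Q: "borel_prob_on K Q" and barycenter_N: "barycenter N = x"
    and a: "a \<ge> 0" and n: "n \<ge> 1"
begin

abbreviation P :: "(nat \<Rightarrow> 'a) measure" where
  "P \<equiv> PiM {..<n} (\<lambda>_. N)"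

definition Z :: "(nat \<Rightarrow> 'a) \<Rightarrow> 'a \<Rightarrow> 'a" where
  "Z xs y = (1 / (real n + a)) *\<^sub>R ((\<Sum>i<n. xs i) + a *\<^sub>R y)"

definition \<theta> :: real where
  "\<theta> = a / (real n + a)"

definition m :: 'a where
  "m = (1 - \<theta>) *\<^sub>R x + \<theta> *\<^sub>R barycenter Q"

lemma x_in: "x \<in> K"
  using barycenter_in[OF borel_N convex compact] barycenter_N by simp

lemma \<theta>: "0 \<le> \<theta>" "\<theta> \<le> 1" "1 - \<theta> = real n / (real n + a)"
  using a n by (auto simp: \<theta>_def field_simps)

lemma m_in: "m \<in> K"
  unfolding m_def using \<theta> by (intro convexD_alt[OF convex x_in barycenter_in[OF borel_Q convex compact]])

lemma Z_eq: "Z xs y = (1 / (real n + a)) *\<^sub>R (\<Sum>i<n. xs i) + \<theta> *\<^sub>R y"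
  unfolding Z_def \<theta>_def by (simp add: scaleR_add_right)

lemma Z_in:
  assumes xs: "xs \<in> space P" and y: "y \<in> space Q"
  shows "Z xs y \<in> K"
proof -
  have mean: "(\<Sum>i<n. (1 / real n) *\<^sub>R xs i) \<in> K"
    using xs n space_borel_prob_on[OF borel_N] by (intro convex_sum[OF _ convex]) (auto simp: space_PiM)
  have "(1 / (real n + a)) *\<^sub>R (\<Sum>i<n. xs i) = (1 - \<theta>) *\<^sub>R (\<Sum>i<n. (1 / real n) *\<^sub>R xs i)"
    using n by (simp add: \<theta> scaleR_sum_right)
  then show ?thesis
    unfolding Z_eq using convexD_alt[OF convex mean _ \<theta>(1,2), of y] y space_borel_prob_on[OF borel_Q] by simp
qed

lemma Z_measurable: "(\<lambda>(xs, y). Z xs y) \<in> borel_measurable (P \<Otimes>\<^sub>M Q)"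
proof -
  have N_id: "(\<lambda>y. y) \<in> borel_measurable N" and Q_id: "(\<lambda>y. y) \<in> borel_measurable Q"
    using borel_N borel_Q by (auto intro: borel_measurable_continuous_on_borel_prob continuous_on_id)
  have "(\<lambda>p. fst p i) \<in> borel_measurable (P \<Otimes>\<^sub>M Q)" if "i < n" for i
    using measurable_comp[OF measurable_fst
        measurable_comp[OF measurable_component_singleton[of i "{..<n}" "\<lambda>_. N"] N_id]] that
    by (simp add: comp_def)
  moreover have "snd \<in> borel_measurable (P \<Otimes>\<^sub>M Q)"
    using measurable_comp[OF measurable_snd Q_id] by (simp add: comp_def)
  ultimately show ?thesis
    unfolding Z_def case_prod_beta'
    by (intro borel_measurable_scaleR borel_measurable_add borel_measurable_sum borel_measurable_const) auto
qed

sublocale iterated_integral K P Q Z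
  using borel_N borel_Q unfolding borel_prob_on_def
  by (intro iterated_integral.intro compact Z_measurable Z_in prob_space_PiM) auto

lemma prob_N: "prob_space N"
  using borel_N by (simp add: borel_prob_on_def)

lemmas integrable_N = integrable_continuous_on_borel_prob[OF borel_N compact]
  and integrable_Q = integrable_continuous_on_borel_prob[OF borel_Q compact]

lemma avg_affine: "avg (\<lambda>z. inner w z + c) = inner w m + c"
proof -
  interpret P: prob_space P by (rule prob_P)
  interpret Q: prob_space Q by (rule prob_Q)
  have "integrable Q (inner w)" by (intro integrable_Q continuous_intros)
  then have "(\<integral>y. inner w (Z xs y) + c \<partial>Q)
      = (\<Sum>i<n. inner w (xs i)) / (real n + a) + (\<theta> * inner w (barycenter Q) + c)" for xs
    using integral_inner_barycenter[OF borel_Q compact, of w]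
    by (simp add: Z_eq inner_add_right inner_sum_right Q.prob_space)
  then have "avg (\<lambda>z. inner w z + c)
      = (\<integral>xs. (\<Sum>i<n. inner w (xs i)) / (real n + a) + (\<theta> * inner w (barycenter Q) + c) \<partial>P)"
    by (simp add: avg_def)
  moreover have coordinate: "integrable P (\<lambda>xs. inner w (xs i))" "(\<integral>xs. inner w (xs i) \<partial>P) = inner w x"
    if "i < n" for i
  proof -
    have "integrable N (inner w)" by (intro integrable_N continuous_intros)
    then show "integrable P (\<lambda>xs. inner w (xs i))" "(\<integral>xs. inner w (xs i) \<partial>P) = inner w x"
      using that integral_inner_barycenter[OF borel_N compact, of w] barycenter_N
      by (simp_all add: integrable_PiM_coordinate integral_PiM_coordinate prob_N)
  qed
  then have "integrable P (\<lambda>xs. \<Sum>i<n. inner w (xs i))"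
    and "(\<integral>xs. (\<Sum>i<n. inner w (xs i)) \<partial>P) = real n * inner w x"
    by (auto intro!: Bochner_Integration.integrable_sum simp: Bochner_Integration.integral_sum)
  ultimately have "avg (\<lambda>z. inner w z + c)
      = real n / (real n + a) * inner w x + (\<theta> * inner w (barycenter Q) + c)"
    by (simp add: P.prob_space)
  then show ?thesis by (simp add: m_def inner_add_right flip: \<theta>(3))
qed

lemma norm_diff_le_diameter: "y \<in> K \<Longrightarrow> z \<in> K \<Longrightarrow> norm (y - z) \<le> diameter K"
  using diameter_bounded_bound[OF compact_imp_bounded[OF compact]] by (simp add: dist_norm)

lemma
  assumes ij: "i < n" "j < n"
  shows integrable_inner_centered: "integrable P (\<lambda>xs. inner (xs i - x) (xs j - x))"
    and integral_inner_centered: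
      "(\<integral>xs. inner (xs i - x) (xs j - x) \<partial>P) = (if i = j then \<integral>y. (norm (y - x))\<^sup>2 \<partial>N else 0)"
proof -
  have "integrable P (\<lambda>xs. inner (xs i - x) (xs j - x)) \<and>
      (\<integral>xs. inner (xs i - x) (xs j - x) \<partial>P) = (if i = j then \<integral>y. (norm (y - x))\<^sup>2 \<partial>N else 0)"
  proof (cases "i = j")
    case True
    have "integrable N (\<lambda>y. (norm (y - x))\<^sup>2)" and "j \<in> {..<n}"
      using ij by (auto intro!: integrable_N continuous_intros)
    from integrable_PiM_coordinate[OF prob_N this] integral_PiM_coordinate[OF prob_N this]
    show ?thesis using True by (simp add: power2_norm_eq_inner)
  next
    case False
    interpret N: prob_space N by (rule prob_N)
    have g: "integrable N (\<lambda>y. inner (y - x) b)" for b by (intro integrable_N continuous_intros)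
    have "(\<integral>y. inner (y - x) b \<partial>N) = 0" for b
    proof -
      have "inner (y - x) b = inner b y - inner b x" for y
        by (metis inner_commute inner_diff_right)
      then have "(\<integral>y. inner (y - x) b \<partial>N) = (\<integral>y. inner b y - inner b x \<partial>N)"
        by presburger
      also have "\<dots> = 0"
        using integral_inner_barycenter[OF borel_N compact, of b] barycenter_N
        by (subst Bochner_Integration.integral_diff) (auto intro!: integrable_N continuous_intros simp: N.prob_space)
      finally show ?thesis .
    qed
    then have "integrable P (\<lambda>xs. inner (xs i - x) b * inner (xs j - x) b) \<and>
        (\<integral>xs. inner (xs i - x) b * inner (xs j - x) b \<partial>P) = 0" for b
      using False ij integrable_PiM_coordinate_pair[OF prob_N g g, of "{..<n}" i j]
        integral_PiM_coordinate_pair[OF prob_N g g, of "{..<n}" i j] by simp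
    then show ?thesis
      using False by (subst (1 2) euclidean_inner)
        (simp add: Bochner_Integration.integral_sum Bochner_Integration.integrable_sum)
  qed
  then show "integrable P (\<lambda>xs. inner (xs i - x) (xs j - x))"
    and "(\<integral>xs. inner (xs i - x) (xs j - x) \<partial>P) = (if i = j then \<integral>y. (norm (y - x))\<^sup>2 \<partial>N else 0)"
    by auto
qed

lemma
  shows integrable_norm_sum_centered: "integrable P (\<lambda>xs. (norm (\<Sum>i<n. xs i - x))\<^sup>2)"
    and integral_norm_sum_centered_le: "(\<integral>xs. (norm (\<Sum>i<n. xs i - x))\<^sup>2 \<partial>P) \<le> real n * (diameter K)\<^sup>2"
proof -
  interpret N: prob_space N by (rule prob_N)
  have expand: "(norm (\<Sum>i<n. xs i - x))\<^sup>2 = (\<Sum>i<n. \<Sum>j<n. inner (xs i - x) (xs j - x))" for xs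
    unfolding power2_norm_eq_inner inner_sum_left inner_sum_right by (rule sum.swap)
  show "integrable P (\<lambda>xs. (norm (\<Sum>i<n. xs i - x))\<^sup>2)"
    unfolding expand by (intro Bochner_Integration.integrable_sum integrable_inner_centered) auto
  have "(\<integral>xs. (norm (\<Sum>i<n. xs i - x))\<^sup>2 \<partial>P)
      = (\<Sum>i<n. \<Sum>j<n. \<integral>xs. inner (xs i - x) (xs j - x) \<partial>P)"
    unfolding expand
    by (subst Bochner_Integration.integral_sum, rule Bochner_Integration.integrable_sum,
        simp_all add: Bochner_Integration.integral_sum integrable_inner_centered)
  also have "\<dots> = real n * (\<integral>y. (norm (y - x))\<^sup>2 \<partial>N)"
    by (simp add: integral_inner_centered)
  also have "\<dots> \<le> real n * (diameter K)\<^sup>2"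
    using norm_diff_le_diameter[OF _ x_in] space_borel_prob_on[OF borel_N]
    by (intro mult_left_mono N.integral_le_const AE_I2 integrable_N continuous_intros power_mono) auto
  finally show "(\<integral>xs. (norm (\<Sum>i<n. xs i - x))\<^sup>2 \<partial>P) \<le> real n * (diameter K)\<^sup>2" .
qed

lemma avg_norm_diff_power2_le: "avg (\<lambda>z. (norm (z - m))\<^sup>2) \<le> 2 * (1 + a) * (diameter K)\<^sup>2 / (real n + a)"
proof -
  interpret P: prob_space P by (rule prob_P)
  interpret Q: prob_space Q by (rule prob_Q)
  define D where "D = diameter K"
  define S where "S xs = (norm (\<Sum>i<n. xs i - x))\<^sup>2" for xs
  have na: "real n + a > 0" using n a by simp
  have split: "Z xs y - m = (1 / (real n + a)) *\<^sub>R (\<Sum>i<n. xs i - x) + \<theta> *\<^sub>R (y - barycenter Q)" for xs y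
    using na by (simp add: Z_eq m_def \<theta>(3) sum_subtractf scaleR_diff_right algebra_simps)
      (simp add: sum_constant_scaleR scaleR_scaleR)
  have pointwise: "(norm (Z xs y - m))\<^sup>2 \<le> 2 * S xs / (real n + a)\<^sup>2 + 2 * \<theta>\<^sup>2 * D\<^sup>2"
    if "y \<in> space Q" for xs y
  proof -
    have "norm (y - barycenter Q) \<le> D"
      using that space_borel_prob_on[OF borel_Q] barycenter_in[OF borel_Q convex compact]
      by (simp add: D_def norm_diff_le_diameter)
    then have "(norm (\<theta> *\<^sub>R (y - barycenter Q)))\<^sup>2 \<le> \<theta>\<^sup>2 * D\<^sup>2"
      using \<theta> by (simp add: power_mult_distrib mult_left_mono power_mono)
    moreover have "(norm ((1 / (real n + a)) *\<^sub>R (\<Sum>i<n. xs i - x)))\<^sup>2 = S xs / (real n + a)\<^sup>2"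
      using na by (simp add: S_def power_divide)
    moreover have "(norm (Z xs y - m))\<^sup>2
        \<le> 2 * (norm ((1 / (real n + a)) *\<^sub>R (\<Sum>i<n. xs i - x)))\<^sup>2 + 2 * (norm (\<theta> *\<^sub>R (y - barycenter Q)))\<^sup>2"
      unfolding split by (rule norm_add_power2_le)
    ultimately show ?thesis by simp
  qed
  have "avg (\<lambda>z. (norm (z - m))\<^sup>2) \<le> (\<integral>xs. 2 * S xs / (real n + a)\<^sup>2 + 2 * \<theta>\<^sup>2 * D\<^sup>2 \<partial>P)"
    unfolding avg_def using pointwise integrable_norm_sum_centered
    by (intro integral_mono integrable_outer Q.integral_le_const integrable_inner AE_I2 continuous_intros)
      (auto simp: S_def)
  also have "\<dots> \<le> 2 * (real n * D\<^sup>2) / (real n + a)\<^sup>2 + 2 * \<theta>\<^sup>2 * D\<^sup>2"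
    using integrable_norm_sum_centered integral_norm_sum_centered_le
    by (simp add: S_def D_def P.prob_space divide_right_mono)
  also have "\<dots> = 2 * (real n + a\<^sup>2) * D\<^sup>2 / (real n + a)\<^sup>2"
    using na by (simp add: \<theta>_def power_divide field_simps)
  also have "\<dots> \<le> 2 * ((1 + a) * (real n + a)) * D\<^sup>2 / (real n + a)\<^sup>2"
    using a by (intro divide_right_mono mult_right_mono) (auto simp: algebra_simps power2_eq_square)
  also have "\<dots> = 2 * (1 + a) * D\<^sup>2 / (real n + a)"
    using na by (simp add: power2_eq_square)
  finally show ?thesis by (simp add: D_def)
qed

lemma curvature_scale:
  shows "0 < sqrt (1 / (real n + a))" and "\<omega> \<le> 2 * (\<omega> * (real n + a) / 2) * (sqrt (1 / (real n + a)))\<^sup>2"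
  using n a by simp_all

context
  fixes f :: "'a \<Rightarrow> real" and \<omega> :: real
  assumes f: "continuous_on K f"
    and second: "\<And>u v. u \<in> K \<Longrightarrow> v \<in> K \<Longrightarrow> norm (u - v) \<le> 2 * sqrt (1 / (real n + a)) \<Longrightarrow>
                   \<bar>f u - 2 * f ((1/2) *\<^sub>R (u + v)) + f v\<bar> \<le> \<omega>"
begin

lemma omega_nonneg: "0 \<le> \<omega>"
  using second[OF x_in x_in] n a by simp

lemma abs_avg_diff_barycenter_le: "\<bar>avg f - f m\<bar> \<le> (real DIM('a) + 1 + (1 + a) * (diameter K)\<^sup>2) * \<omega>"
proof -
  have "\<bar>avg f - f m\<bar> \<le> (real DIM('a) + 1) * \<omega> + \<omega> * (real n + a) / 2 * avg (\<lambda>z. (norm (z - m))\<^sup>2)"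
    by (rule abs_diff_le_of_second_difference_bound[OF convex compact m_in avg_affine f curvature_scale second])
  also have "\<omega> * (real n + a) / 2 * avg (\<lambda>z. (norm (z - m))\<^sup>2)
      \<le> \<omega> * (real n + a) / 2 * (2 * (1 + a) * (diameter K)\<^sup>2 / (real n + a))"
    using avg_norm_diff_power2_le omega_nonneg n a by (intro mult_left_mono) simp_all
  also have "\<dots> = (1 + a) * (diameter K)\<^sup>2 * \<omega>"
    using n a by (simp add: field_simps)
  finally show ?thesis by (simp add: algebra_simps)
qed

lemma abs_diff_barycenter_le:
  assumes B: "\<And>z. z \<in> K \<Longrightarrow> \<bar>f z\<bar> \<le> B"
  shows "\<bar>f m - f x\<bar> \<le> (1 + a * (diameter K)\<^sup>2) * \<omega> + 2 * a * B / (real n + a)"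
proof -
  define \<Lambda> where "\<Lambda> = \<omega> * (real n + a) / 2"
  have bQ: "barycenter Q \<in> K" by (rule barycenter_in[OF borel_Q convex compact])
  have "\<bar>f m - ((1 - \<theta>) * f x + \<theta> * f (barycenter Q))\<bar>
      \<le> \<omega> + \<Lambda> * (\<theta> * (1 - \<theta>) * (norm (x - barycenter Q))\<^sup>2)"
    unfolding m_def \<Lambda>_def
    by (rule abs_segment_bound_of_second_difference_bound[OF convex f curvature_scale second x_in bQ \<theta>(1,2)])
  also have "\<Lambda> * (\<theta> * (1 - \<theta>) * (norm (x - barycenter Q))\<^sup>2) \<le> \<Lambda> * (\<theta> * (diameter K)\<^sup>2)"
  proof -
    have "(1 - \<theta>) * (norm (x - barycenter Q))\<^sup>2 \<le> 1 * (diameter K)\<^sup>2"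
      using \<theta>(1,2) norm_diff_le_diameter[OF x_in bQ] by (intro mult_mono power_mono) auto
    then show ?thesis
      using \<theta>(1) omega_nonneg n a by (simp add: mult.assoc mult_left_mono \<Lambda>_def)
  qed
  also have "\<Lambda> * (\<theta> * (diameter K)\<^sup>2) \<le> a * (diameter K)\<^sup>2 * \<omega>"
    using n a omega_nonneg by (simp add: \<Lambda>_def \<theta>_def field_simps)
  finally have "\<bar>f m - ((1 - \<theta>) * f x + \<theta> * f (barycenter Q))\<bar> \<le> (1 + a * (diameter K)\<^sup>2) * \<omega>"
    by (simp add: algebra_simps)
  moreover have "\<bar>\<theta> * (f (barycenter Q) - f x)\<bar> \<le> \<theta> * (2 * B)"
    using B[OF bQ] B[OF x_in] \<theta> by (auto simp: abs_mult intro!: mult_left_mono)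
  moreover have "\<theta> * (2 * B) = 2 * a * B / (real n + a)" by (simp add: \<theta>_def)
  ultimately show ?thesis by (simp add: algebra_simps abs_le_iff)
qed

end

end

lemma abs_le_supnorm:
  fixes f :: "'a::metric_space \<Rightarrow> real"
  assumes "compact K" "continuous_on K f" "z \<in> K"
  shows "\<bar>f z\<bar> \<le> supnorm K f"
proof -
  obtain B where "\<And>z. z \<in> K \<Longrightarrow> norm (f z) \<le> B" using continuous_on_compact_bound[OF assms(1,2)] by blast
  then have "bdd_above ((\<lambda>z. \<bar>f z\<bar>) ` K)" by (intro bdd_aboveI2[where M = B]) simp
  then show ?thesis unfolding supnorm_def using assms(3) by (auto intro: cSup_upper)
qed

lemma supnorm_le:
  assumes "K \<noteq> {}" "\<And>z. z \<in> K \<Longrightarrow> \<bar>g z\<bar> \<le> c"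
  shows "supnorm K g \<le> c"
  unfolding supnorm_def using assms by (auto intro: cSup_least)

lemma second_difference_le_omega2:
  fixes f :: "'a::euclidean_space \<Rightarrow> real"
  assumes K: "convex K" "compact K" and f: "continuous_on K f"
    and xy: "x \<in> K" "y \<in> K" "norm (x - y) \<le> 2 * \<delta>"
  shows "\<bar>f x - 2 * f ((1/2) *\<^sub>R (x + y)) + f y\<bar> \<le> omega2 K f \<delta>"
proof -
  have mid: "(1/2) *\<^sub>R (x + y) \<in> K" if "x \<in> K" "y \<in> K" for x y
    using convexD[OF K(1) that, of "1/2" "1/2"] by (simp add: scaleR_add_right)
  have "\<bar>f x - 2 * f ((1/2) *\<^sub>R (x + y)) + f y\<bar> \<le> 4 * supnorm K f" if "x \<in> K" "y \<in> K" for x y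
    using abs_le_supnorm[OF K(2) f that(1)] abs_le_supnorm[OF K(2) f that(2)]
      abs_le_supnorm[OF K(2) f mid[OF that]] by linarith
  then have "bdd_above {\<bar>f x - 2 * f ((1/2) *\<^sub>R (x + y)) + f y\<bar> | x y. x \<in> K \<and> y \<in> K \<and> norm (x - y) \<le> 2 * \<delta>}"
    by (intro bdd_aboveI[where M = "4 * supnorm K f"]) auto
  then show ?thesis unfolding omega2_def using xy by (auto intro: cSup_upper)
qed

lemma barycenter_representing_measure:
  fixes T :: "('a::euclidean_space \<Rightarrow> real) \<Rightarrow> ('a \<Rightarrow> real)"
  assumes "compact K" and \<mu>: "borel_prob_on K \<mu>"
    and affine: "\<And>w c. T (\<lambda>y. inner w y + c) x = inner w x + c"
    and represent: "\<And>g. continuous_on K g \<Longrightarrow> (\<integral>y. g y \<partial>\<mu>) = T g x"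
  shows "barycenter \<mu> = x"
proof (rule barycenter_eqI[OF \<mu> \<open>compact K\<close>])
  fix w
  have "(\<integral>y. inner w y \<partial>\<mu>) = T (\<lambda>y. inner w y + 0) x"
    by (simp add: represent continuous_on_inner continuous_on_const continuous_on_id)
  then show "(\<integral>y. inner w y \<partial>\<mu>) = inner w x" by (simp only: affine)
qed

lemma Cn_pointwise_le:
  fixes nu :: "'a::euclidean_space \<Rightarrow> 'a measure" and f :: "'a \<Rightarrow> real"
  assumes K: "convex K" "compact K" and x: "x \<in> K"
    and nu: "borel_prob_on K (nu x)" "barycenter (nu x) = x" and mu: "borel_prob_on K (mu n)"
    and a: "a \<ge> 0" and n: "n \<ge> 1" and f: "continuous_on K f"
  shows "\<bar>Cn nu mu a n f x - f x\<bar>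
    \<le> (real DIM('a) + 2 + (1 + 2 * a) * (diameter K)\<^sup>2) * omega2 K f (sqrt (1 / (real n + a)))
       + 2 * a * supnorm K f / (real n + a)"
proof -
  interpret Cn_point K "nu x" "mu n" n a x
    using K nu mu a n by unfold_locales
  note second = second_difference_le_omega2[OF K f, of _ _ "sqrt (1 / (real n + a))"]
  have "Cn nu mu a n f x = avg f" by (simp add: Cn_def avg_def Z_def)
  with abs_avg_diff_barycenter_le[OF f second] abs_diff_barycenter_le[OF f second abs_le_supnorm[OF K(2) f]]
  show ?thesis by (simp add: algebra_simps abs_le_iff)
qed

theorem proposition3p5:
  fixes K :: "'a::euclidean_space set"
    and T :: "('a \<Rightarrow> real) \<Rightarrow> ('a \<Rightarrow> real)"
    and nu :: "'a \<Rightarrow> 'a measure"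
    and mu :: "nat \<Rightarrow> 'a measure"
    and a :: real
  assumes "convex K" and "compact K" and "K \<noteq> {}"
    and "markov_operator K T"
    and "\<forall>w c. \<forall>x\<in>K. T (\<lambda>y. inner w y + c) x = inner w x + c"
    and "\<forall>x\<in>K. borel_prob_on K (nu x)"
    and "\<forall>f. continuous_on K f \<longrightarrow> (\<forall>x\<in>K. (\<integral>y. f y \<partial>(nu x)) = T f x)"
    and "a \<ge> 0"
    and "\<forall>n\<ge>1. borel_prob_on K (mu n)"
  shows "\<exists>C M. C > 0 \<and> M > 0 \<and>
    (\<forall>f n. continuous_on K f \<longrightarrow> n \<ge> 1 \<longrightarrow>
       supnorm K (\<lambda>x. Cn nu mu a n f x - f x)
         \<le> C * (M / (real n + a) * supnorm K f + omega2 K f (sqrt (M / (real n + a)))))"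
proof (intro exI conjI allI impI)
  note K = assms(1,2) and a = assms(8)
  define C\<^sub>0 where "C\<^sub>0 = real DIM('a) + 2 + (1 + 2 * a) * (diameter K)\<^sup>2"
  have C\<^sub>0: "0 \<le> C\<^sub>0" using a by (simp add: C\<^sub>0_def)
  show "C\<^sub>0 + 2 * a > 0" "(1::real) > 0" using a by (simp_all add: C\<^sub>0_def add_pos_nonneg)
  fix f :: "'a \<Rightarrow> real" and n :: nat assume f: "continuous_on K f" and n: "n \<ge> 1"
  obtain z where z: "z \<in> K" using assms(3) by blast
  define \<omega> where "\<omega> = omega2 K f (sqrt (1 / (real n + a)))"
  define B where "B = supnorm K f / (real n + a)"
  have "0 \<le> \<omega>" using second_difference_le_omega2[OF K f z z] a by (simp add: \<omega>_def)
  moreover have "0 \<le> B" using abs_le_supnorm[OF K(2) f z] a by (simp add: B_def)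
  ultimately have slack: "C\<^sub>0 * \<omega> + 2 * a * B \<le> (C\<^sub>0 + 2 * a) * (B + \<omega>)"
    using C\<^sub>0 a by (simp add: algebra_simps)
  have "\<bar>Cn nu mu a n f x - f x\<bar> \<le> (C\<^sub>0 + 2 * a) * (1 / (real n + a) * supnorm K f + \<omega>)"
    if x: "x \<in> K" for x
  proof -
    have nu: "borel_prob_on K (nu x)" and mu: "borel_prob_on K (mu n)" using assms(6,9) x n by auto
    have "barycenter (nu x) = x"
      by (rule barycenter_representing_measure[where T = T, OF K(2) nu]) (use assms(5,7) x in blast)+
    from Cn_pointwise_le[where nu = nu and mu = mu, OF K x nu this mu a n f]
    show ?thesis using slack by (simp add: C\<^sub>0_def \<omega>_def B_def)
  qed
  then show "supnorm K (\<lambda>x. Cn nu mu a n f x - f x)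
      \<le> (C\<^sub>0 + 2 * a) * (1 / (real n + a) * supnorm K f + omega2 K f (sqrt (1 / (real n + a))))"
    unfolding \<omega>_def by (rule supnorm_le[OF assms(3)])
qed

end
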